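(* Suppose the strict partition $\lambda$ is shifted-balanced of Type (1) or Type (2). Then there exist integers $r_{ij}$, $[i,j]\in P^{\mathrm{shift}}_\lambda$, such that: (a) for every box $[i,j]\in P^{\mathrm{shift}}_\lambda$ with $i\ne j$: $\sum_{[i',j]\in P^{\mathrm{shift}}_\lambda}r_{i',j}=2$ and $\sum_{[i,j']\in P^{\mathrm{shift}}_\lambda}r_{i,j'}=2$; (b) for every box $[i,i]\in P^{\mathrm{shift}}_\lambda$: $\sum_{i'\le i,\ j'\le i}r_{i',j'}+\sum_{i'\ge i,\ j'\ge i}r_{i',j'}=4$ (sums over boxes $[i',j']\in P^{\mathrm{shift}}_\lambda$); (c) for every outward corner $c\in C^{\mathrm{shift}}(\lambda)$: $\sum_{[i,j]\in P^{\mathrm{shift}}_\lambda,\ c\in C^{\mathrm{shift}}_{ij}(\lambda)}r_{ij}=0$.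
   Context: $\delta_n=(n,n-1,\ldots,1)$, $b^a=(b,\ldots,b)$ ($a$ parts), partition sums are componentwise. A partition $\nu$ is balanced as a straight shape with height and width $k$ if $\ell(\nu)=\nu_1=k$ (or $\nu=\varnothing$ when $k=0$) and for every $1\le i\le k-1$ with $\nu_i>\nu_{i+1}$, $i+\nu_{i+1}=k$. A strict partition $\lambda$ is shifted-balanced of Type (1) if $\lambda=\delta_n+\nu$ and of Type (2) if $\lambda=\delta_n+\nu+(n-1-k)^n$, for some $0\le k<n$ and $\nu$ balanced with height and width $k$. $P^{\mathrm{shift}}_\lambda$ is the set of boxes $[i,j]$ with $1\le i\le\ell(\lambda)$, $i\le j\le i+\lambda_i-1$. $C^{\mathrm{shift}}(\lambda)$ is the set of corners $c_t$ for $1\le t\le\ell(\lambda)-1$ with $\lambda_t-\lambda_{t+1}\ge2$, where $c_t$ occurs at the lattice point $(t,t+\lambda_{t+1})$ (box $[i,j]$ having southeast corner $(i,j)$); $C^{\mathrm{shift}}_{ij}(\lambda)$ consists of those $c_t$ with $t\ge i$ and $t+\lambda_{t+1}\ge j$. *)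

theory Defs
  imports Main
begin

text \<open>Partitions are lists of parts in weakly decreasing order; part i (1-based)
  is part xs i. Missing parts are 0.\<close>

definition part :: "nat list \<Rightarrow> nat \<Rightarrow> nat" where
  "part xs i = (if 1 \<le> i \<and> i \<le> length xs then xs ! (i - 1) else 0)"

definition is_partition :: "nat list \<Rightarrow> bool" where
  "is_partition xs \<longleftrightarrow> sorted_wrt (\<ge>) xs \<and> (\<forall>x\<in>set xs. 0 < x)"

definition is_strict_partition :: "nat list \<Rightarrow> bool" where
  "is_strict_partition xs \<longleftrightarrow> sorted_wrt (>) xs \<and> (\<forall>x\<in>set xs. 0 < x)"

definition psum :: "nat list \<Rightarrow> nat list \<Rightarrow> nat list" where
  "psum a b = map (\<lambda>i. part a i + part b i) [1..<max (length a) (length b) + 1]"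

definition delta :: "nat \<Rightarrow> nat list" where
  "delta n = map (\<lambda>i. n - i) [0..<n]"

text \<open>b^a = (b,...,b) with a parts.\<close>
definition rect :: "nat \<Rightarrow> nat \<Rightarrow> nat list" where
  "rect b a = replicate a b"

definition balanced :: "nat list \<Rightarrow> nat \<Rightarrow> bool" where
  "balanced \<nu> k \<longleftrightarrow> is_partition \<nu> \<and>
     (if k = 0 then \<nu> = [] else
       length \<nu> = k \<and> part \<nu> 1 = k \<and>
       (\<forall>i. 1 \<le> i \<and> i \<le> k - 1 \<and> part \<nu> i > part \<nu> (i + 1) \<longrightarrow> i + part \<nu> (i + 1) = k))"

definition shifted_balanced_1 :: "nat list \<Rightarrow> bool" where
  "shifted_balanced_1 lam \<longleftrightarrow> (\<exists>n k \<nu>. k < n \<and> balanced \<nu> k \<and> lam = psum (delta n) \<nu>)"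

definition shifted_balanced_2 :: "nat list \<Rightarrow> bool" where
  "shifted_balanced_2 lam \<longleftrightarrow> (\<exists>n k \<nu>. k < n \<and> balanced \<nu> k \<and>
      lam = psum (psum (delta n) \<nu>) (rect (n - 1 - k) n))"

definition shifted_boxes :: "nat list \<Rightarrow> (nat \<times> nat) set" where
  "shifted_boxes lam = {(i, j). 1 \<le> i \<and> i \<le> length lam \<and> i \<le> j \<and> j + 1 \<le> i + part lam i}"

definition corner_indices :: "nat list \<Rightarrow> nat set" where
  "corner_indices lam = {t. 1 \<le> t \<and> t + 1 \<le> length lam \<and> part lam t \<ge> part lam (t + 1) + 2}"

definition corner_point :: "nat list \<Rightarrow> nat \<Rightarrow> nat \<times> nat" where
  "corner_point lam t = (t, t + part lam (t + 1))"

definition shifted_corners :: "nat list \<Rightarrow> (nat \<times> nat) set" where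
  "shifted_corners lam = corner_point lam ` corner_indices lam"

definition shifted_corners_ij :: "nat list \<Rightarrow> nat \<Rightarrow> nat \<Rightarrow> (nat \<times> nat) set" where
  "shifted_corners_ij lam i j = {c \<in> shifted_corners lam. fst c \<ge> i \<and> snd c \<ge> j}"

end

theory Submission imports Defs begin

text \<open>Write \<open>L\<close> for the length of \<open>\<lambda>\<close> and \<open>P = \<lambda>\<^sub>1\<close>. For a shifted-balanced \<open>\<lambda>\<close> every outward
  corner \<open>c\<^sub>t = (t, t + \<lambda>\<^sub>t\<^sub>+\<^sub>1)\<close> lies on the antidiagonal \<open>i + j = P\<close>, and if the last row has
  length at least 2 then \<open>P = 2L - 1\<close>. Under these two conditions an explicit weighting works:
  weight 2 on the diagonal boxes \<open>[d,d]\<close>, \<open>2 \<le> d \<le> L\<close>, and on the boxes \<open>[1,j]\<close>, \<open>L < j \<le> P\<close>,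
  weight \<open>3 - P\<close> on \<open>[1,1]\<close>, and a correction \<open>\<pm>(2L - 1 - P)\<close> on \<open>[1,L]\<close> and \<open>[L,L]\<close>.
  Every line and hook sum then consists of a handful of these weights, and the region cut
  out by the corner \<open>c\<^sub>t\<close> sums to \<open>(3 - P) + 2(t - 1) + 2(t + \<lambda>\<^sub>t\<^sub>+\<^sub>1 - L) + (2L - 1 - P) = 0\<close>.\<close>

lemma length_psum [simp]: "length (psum a b) = max (length a) (length b)"
  unfolding psum_def by (simp only: length_map length_upt)

lemma part_psum: "part (psum a b) i = part a i + part b i"
proof (cases "1 \<le> i \<and> i \<le> max (length a) (length b)")
  case True
  have index: "[1..<max (length a) (length b) + 1] ! (i - 1) = i"
    using True by (subst nth_upt) auto
  have "part (psum a b) i = psum a b ! (i - 1)"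
    using True by (simp add: part_def)
  also have "\<dots> = part a ([1..<max (length a) (length b) + 1] ! (i - 1))
                  + part b ([1..<max (length a) (length b) + 1] ! (i - 1))"
    using True unfolding psum_def by (subst nth_map) auto
  also have "\<dots> = part a i + part b i"
    by (simp only: index)
  finally show ?thesis .
next
  case False
  then show ?thesis
    by (auto simp: part_def)
qed

lemma length_delta [simp]: "length (delta n) = n"
  by (simp add: delta_def)

lemma part_delta: "part (delta n) i = (if 1 \<le> i \<and> i \<le> n then n + 1 - i else 0)"
  by (auto simp: part_def delta_def)

lemma length_rect [simp]: "length (rect b a) = a"
  by (simp add: rect_def)

lemma part_rect: "part (rect b a) i = (if 1 \<le> i \<and> i \<le> a then b else 0)"
  by (auto simp: part_def rect_def)

lemma strict_partition_part_gap:
  assumes "is_strict_partition lam" "1 \<le> i" "i \<le> j" "j \<le> length lam"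
  shows "part lam j + (j - i) \<le> part lam i"
  using assms(3,4)
proof (induction j rule: dec_induct)
  case (step j)
  have "sorted_wrt (>) lam"
    using assms(1) by (simp add: is_strict_partition_def)
  then have "lam ! j < lam ! (j - 1)"
    using sorted_wrt_nth_less[of "(>)" lam "j - 1" j] step assms(2) by simp
  with step assms(2) show ?case
    by (simp add: part_def)
qed simp

lemma strict_partition_part_pos:
  assumes "is_strict_partition lam" "1 \<le> i" "i \<le> length lam"
  shows "1 \<le> part lam i"
proof -
  have "lam ! (i - 1) \<in> set lam"
    using assms(2,3) by (intro nth_mem) simp
  then have "0 < lam ! (i - 1)"
    using assms(1) by (simp add: is_strict_partition_def)
  with assms(2,3) show ?thesis
    by (simp add: part_def)
qed

lemma balancedD:
  assumes "balanced \<nu> k"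
  shows "length \<nu> = k" and "part \<nu> 1 = k" and "\<And>i. k < i \<Longrightarrow> part \<nu> i = 0"
    and "\<And>i. 1 \<le> i \<Longrightarrow> i \<le> k - 1 \<Longrightarrow> part \<nu> (i + 1) < part \<nu> i \<Longrightarrow> i + part \<nu> (i + 1) = k"
  using assms by (auto simp: balanced_def part_def split: if_splits)

locale corners_on_antidiagonal =
  fixes lam :: "nat list"
  assumes strict: "is_strict_partition lam"
    and nonempty: "lam \<noteq> []"
    and last_part: "2 \<le> part lam (length lam) \<Longrightarrow> part lam 1 = 2 * length lam - 1"
    and corner: "t \<in> corner_indices lam \<Longrightarrow> t + (t + part lam (t + 1)) = part lam 1"

lemma shifted_balanced_parts:
  assumes "shifted_balanced_1 lam \<or> shifted_balanced_2 lam"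
  obtains n k \<nu> e where "k < n" "balanced \<nu> k" "e = 0 \<or> e = n - 1 - k" "length lam = n"
    "\<And>i. 1 \<le> i \<Longrightarrow> i \<le> n \<Longrightarrow> part lam i = n + 1 - i + part \<nu> i + e"
  using assms
proof
  assume "shifted_balanced_1 lam"
  then obtain n k \<nu> where "k < n" "balanced \<nu> k" "lam = psum (delta n) \<nu>"
    by (auto simp: shifted_balanced_1_def)
  with that[of k n \<nu> 0] show thesis
    by (simp add: balancedD(1) part_psum part_delta)
next
  assume "shifted_balanced_2 lam"
  then obtain n k \<nu> where "k < n" "balanced \<nu> k"
    "lam = psum (psum (delta n) \<nu>) (rect (n - 1 - k) n)"
    by (auto simp: shifted_balanced_2_def)
  with that[of k n \<nu> "n - 1 - k"] show thesis
    by (simp add: balancedD(1) part_psum part_delta part_rect)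
qed

lemma shifted_balanced_corners_on_antidiagonal:
  assumes "is_strict_partition lam" "shifted_balanced_1 lam \<or> shifted_balanced_2 lam"
  shows "corners_on_antidiagonal lam"
proof -
  obtain n k \<nu> e where kn: "k < n" and \<nu>: "balanced \<nu> k" and e: "e = 0 \<or> e = n - 1 - k"
    and len: "length lam = n"
    and parts: "\<And>i. 1 \<le> i \<Longrightarrow> i \<le> n \<Longrightarrow> part lam i = n + 1 - i + part \<nu> i + e"
    using shifted_balanced_parts[OF assms(2)] by metis
  have part1: "part lam 1 = n + k + e"
    using kn parts[of 1] balancedD(2)[OF \<nu>] by simp
  show ?thesis
  proof
    show "is_strict_partition lam" by fact
    show "lam \<noteq> []"
      using kn len by auto
  next
    assume "2 \<le> part lam (length lam)"
    moreover have "part lam n = 1 + e"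
      using kn parts[of n] balancedD(3)[OF \<nu>, of n] by simp
    ultimately have "e = n - 1 - k"
      using e len by auto
    then show "part lam 1 = 2 * length lam - 1"
      using part1 kn len by simp
  next
    fix t
    assume "t \<in> corner_indices lam"
    then have t: "1 \<le> t" "t + 1 \<le> n" "part lam (t + 1) + 2 \<le> part lam t"
      using len by (auto simp: corner_indices_def)
    have part_t: "part lam t = n + 1 - t + part \<nu> t + e"
      and part_t1: "part lam (t + 1) = n - t + part \<nu> (t + 1) + e"
      using t parts[of t] parts[of "t + 1"] by auto
    then have drop: "part \<nu> (t + 1) < part \<nu> t"
      using t by simp
    have "t \<le> k"
      using drop balancedD(3)[OF \<nu>, of t] by fastforce
    then have "t + part \<nu> (t + 1) = k"
      using balancedD(3)[OF \<nu>, of "t + 1"] balancedD(4)[OF \<nu>, of t] t drop by (cases "t = k") auto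
    then show "t + (t + part lam (t + 1)) = part lam 1"
      using part_t1 part1 t by simp
  qed
qed

definition antidiagonal_weight :: "nat list \<Rightarrow> nat \<times> nat \<Rightarrow> int" where
  "antidiagonal_weight lam b =
     (if b = (1, 1) then 3 - int (part lam 1) else 0)
   + (if b = (1, length lam) then 2 * int (length lam) - 1 - int (part lam 1) else 0)
   - (if b = (length lam, length lam) then 2 * int (length lam) - 1 - int (part lam 1) else 0)
   + (if fst b = snd b \<and> 2 \<le> fst b \<and> fst b \<le> length lam then 2 else 0)
   + (if fst b = 1 \<and> length lam < snd b \<and> snd b \<le> part lam 1 then 2 else 0)"

lemma sum_antidiagonal_weight:
  assumes "finite S"
  shows "sum (antidiagonal_weight lam) S =
      (if (1, 1) \<in> S then 3 - int (part lam 1) else 0)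
    + (if (1, length lam) \<in> S then 2 * int (length lam) - 1 - int (part lam 1) else 0)
    - (if (length lam, length lam) \<in> S then 2 * int (length lam) - 1 - int (part lam 1) else 0)
    + 2 * int (card {d. 2 \<le> d \<and> d \<le> length lam \<and> (d, d) \<in> S})
    + 2 * int (card {j. length lam < j \<and> j \<le> part lam 1 \<and> (1, j) \<in> S})"
proof -
  have card_diagonal: "card {b \<in> S. fst b = snd b \<and> 2 \<le> fst b \<and> fst b \<le> length lam}
      = card {d. 2 \<le> d \<and> d \<le> length lam \<and> (d, d) \<in> S}"
    by (rule bij_betw_same_card[of fst]) (auto simp: bij_betw_def inj_on_def image_def)
  have card_first_row: "card {b \<in> S. fst b = 1 \<and> length lam < snd b \<and> snd b \<le> part lam 1}
      = card {j. length lam < j \<and> j \<le> part lam 1 \<and> (1, j) \<in> S}"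
    by (rule bij_betw_same_card[of snd]) (auto simp: bij_betw_def inj_on_def image_def)
  have "\<And>Q. (\<Sum>b\<in>S. if Q b then 2 else 0 :: int) = 2 * int (card {b \<in> S. Q b})"
    using assms by (simp add: sum.If_cases Int_def)
  with assms show ?thesis
    unfolding antidiagonal_weight_def card_diagonal[symmetric] card_first_row[symmetric]
    by (simp add: sum.distrib sum_subtractf)
qed

context corners_on_antidiagonal
begin

lemma length_pos: "1 \<le> length lam"
  using nonempty by (simp add: Suc_le_eq)

lemma part_gap: "1 \<le> i \<Longrightarrow> i \<le> j \<Longrightarrow> j \<le> length lam \<Longrightarrow> part lam j + (j - i) \<le> part lam i"
  using strict_partition_part_gap[OF strict] .

lemma part_ge_length_diff: "1 \<le> i \<Longrightarrow> i \<le> length lam \<Longrightarrow> length lam - i + 1 \<le> part lam i"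
  using part_gap[of i "length lam"] strict_partition_part_pos[OF strict, of "length lam"] length_pos
  by simp

lemma length_le_first_part: "length lam \<le> part lam 1"
  using part_ge_length_diff[of 1] length_pos by simp

lemma box_iff:
  "(i, j) \<in> shifted_boxes lam \<longleftrightarrow> 1 \<le> i \<and> i \<le> length lam \<and> i \<le> j \<and> j + 1 \<le> i + part lam i"
  by (simp add: shifted_boxes_def)

lemma diagonal_box_iff: "(d, d) \<in> shifted_boxes lam \<longleftrightarrow> 1 \<le> d \<and> d \<le> length lam"
  using part_ge_length_diff[of d] by (auto simp: box_iff)

text \<open>Stated with \<open>Suc 0\<close>, the form in which the simplifier leaves the row index \<open>1\<close>.\<close>

lemma first_row_box_iff: "(Suc 0, j) \<in> shifted_boxes lam \<longleftrightarrow> 1 \<le> j \<and> j \<le> part lam 1"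
  using length_pos by (auto simp: box_iff)

lemma box_in_first_row_span:
  assumes "(i, j) \<in> shifted_boxes lam"
  shows "j \<le> part lam 1"
proof -
  have "1 \<le> i" "i \<le> length lam" "j + 1 \<le> i + part lam i"
    using assms by (simp_all add: box_iff)
  with part_gap[of 1 i] show ?thesis
    by linarith
qed

lemma finite_boxes: "finite (shifted_boxes lam)"
proof (rule finite_subset)
  show "shifted_boxes lam \<subseteq> {1..length lam} \<times> {1..part lam 1}"
    using box_in_first_row_span by (force simp: box_iff)
qed simp

lemma finite_box_subset: "finite {b \<in> shifted_boxes lam. Q b}"
  using finite_boxes by simp

lemma column_sum_antidiagonal_weight:
  assumes box: "(i, j) \<in> shifted_boxes lam" and off_diagonal: "i \<noteq> j"
  shows "(\<Sum>i' \<in> {i'. (i', j) \<in> shifted_boxes lam}. antidiagonal_weight lam (i', j)) = 2"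
proof -
  let ?L = "length lam" and ?S = "{b \<in> shifted_boxes lam. snd b = j}"
  have ij: "1 \<le> i" "i < j" and j: "j \<le> part lam 1"
    using box off_diagonal box_in_first_row_span by (auto simp: box_iff)
  have "?S = (\<lambda>i'. (i', j)) ` {i'. (i', j) \<in> shifted_boxes lam}"
    by auto
  then have "(\<Sum>i' \<in> {i'. (i', j) \<in> shifted_boxes lam}. antidiagonal_weight lam (i', j))
      = sum (antidiagonal_weight lam) ?S"
    by (simp add: sum.reindex inj_on_def)
  also have "\<dots> = 2"
  proof -
    have "(1, 1) \<notin> ?S"
      using ij by auto
    moreover have "(1, ?L) \<in> ?S \<longleftrightarrow> j = ?L" "(?L, ?L) \<in> ?S \<longleftrightarrow> j = ?L"
      using length_pos length_le_first_part by (auto simp: first_row_box_iff diagonal_box_iff)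
    moreover have "{d. 2 \<le> d \<and> d \<le> ?L \<and> (d, d) \<in> ?S} = (if j \<le> ?L then {j} else {})"
      using ij by (auto simp: diagonal_box_iff)
    moreover have "{j'. ?L < j' \<and> j' \<le> part lam 1 \<and> (1, j') \<in> ?S} = (if ?L < j then {j} else {})"
      using ij j by (auto simp: first_row_box_iff)
    ultimately show ?thesis
      unfolding sum_antidiagonal_weight[OF finite_box_subset]
      by (cases "j < ?L"; cases "j = ?L") auto
  qed
  finally show ?thesis .
qed

lemma row_sum_antidiagonal_weight:
  assumes box: "(i, j) \<in> shifted_boxes lam" and off_diagonal: "i \<noteq> j"
  shows "(\<Sum>j' \<in> {j'. (i, j') \<in> shifted_boxes lam}. antidiagonal_weight lam (i, j')) = 2"
proof -
  let ?L = "length lam" and ?P = "part lam 1" and ?S = "{b \<in> shifted_boxes lam. fst b = i}"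
  have i: "1 \<le> i" "i \<le> ?L" and long_row: "2 \<le> part lam i"
    using box off_diagonal by (auto simp: box_iff)
  have "?S = (\<lambda>j'. (i, j')) ` {j'. (i, j') \<in> shifted_boxes lam}"
    by auto
  then have "(\<Sum>j' \<in> {j'. (i, j') \<in> shifted_boxes lam}. antidiagonal_weight lam (i, j'))
      = sum (antidiagonal_weight lam) ?S"
    by (simp add: sum.reindex inj_on_def)
  also have "\<dots> = 2"
  proof -
    have "(1, 1) \<in> ?S \<longleftrightarrow> i = 1" "(1, ?L) \<in> ?S \<longleftrightarrow> i = 1" "(?L, ?L) \<in> ?S \<longleftrightarrow> i = ?L"
      using length_pos length_le_first_part by (auto simp: first_row_box_iff diagonal_box_iff)
    moreover have "{d. 2 \<le> d \<and> d \<le> ?L \<and> (d, d) \<in> ?S} = (if 2 \<le> i then {i} else {})"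
      using i by (auto simp: diagonal_box_iff)
    moreover have "{j'. ?L < j' \<and> j' \<le> ?P \<and> (1, j') \<in> ?S} = (if i = 1 then {?L<..?P} else {})"
      using i by (auto simp: first_row_box_iff)
    moreover have "i = ?L \<Longrightarrow> ?P = 2 * ?L - 1"
      \<comment> \<open>so the correction on \<open>[L,L]\<close> vanishes whenever row \<open>L\<close> has an off-diagonal box\<close>
      using last_part long_row by simp
    moreover have "i = 1 \<Longrightarrow> ?L \<noteq> 1"
      using last_part long_row by auto
    ultimately show ?thesis
      unfolding sum_antidiagonal_weight[OF finite_box_subset]
      using i length_le_first_part by (cases "i = 1"; cases "i = ?L") (auto simp: of_nat_diff)
  qed
  finally show ?thesis .
qed

lemma hook_sum_antidiagonal_weight:
  assumes "(i, i) \<in> shifted_boxes lam"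
  shows "(\<Sum>b \<in> {(i', j') \<in> shifted_boxes lam. i' \<le> i \<and> j' \<le> i}. antidiagonal_weight lam b)
      + (\<Sum>b \<in> {(i', j') \<in> shifted_boxes lam. i' \<ge> i \<and> j' \<ge> i}. antidiagonal_weight lam b) = 4"
proof -
  let ?L = "length lam" and ?P = "part lam 1"
  let ?U = "{b \<in> shifted_boxes lam. fst b \<le> i \<and> snd b \<le> i}"
    and ?W = "{b \<in> shifted_boxes lam. fst b \<ge> i \<and> snd b \<ge> i}"
  have i: "1 \<le> i" "i \<le> ?L"
    using assms by (auto simp: diagonal_box_iff)
  have "{(i', j') \<in> shifted_boxes lam. i' \<le> i \<and> j' \<le> i} = ?U"
    and "{(i', j') \<in> shifted_boxes lam. i' \<ge> i \<and> j' \<ge> i} = ?W"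
    by auto
  moreover have "sum (antidiagonal_weight lam) ?U + sum (antidiagonal_weight lam) ?W = 4"
  proof -
    have U: "(1, 1) \<in> ?U" "(1, ?L) \<in> ?U \<longleftrightarrow> i = ?L" "(?L, ?L) \<in> ?U \<longleftrightarrow> i = ?L"
      using i length_le_first_part by (auto simp: first_row_box_iff diagonal_box_iff)
    have W: "(1, 1) \<in> ?W \<longleftrightarrow> i = 1" "(1, ?L) \<in> ?W \<longleftrightarrow> i = 1" "(?L, ?L) \<in> ?W"
      using i length_le_first_part by (auto simp: first_row_box_iff diagonal_box_iff)
    have "{d. 2 \<le> d \<and> d \<le> ?L \<and> (d, d) \<in> ?U} = {2..i}"
      and "{d. 2 \<le> d \<and> d \<le> ?L \<and> (d, d) \<in> ?W} = {max 2 i..?L}"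
      using i by (auto simp: diagonal_box_iff)
    then have diagonal_U: "card {d. 2 \<le> d \<and> d \<le> ?L \<and> (d, d) \<in> ?U} = i - 1"
      and diagonal_W: "card {d. 2 \<le> d \<and> d \<le> ?L \<and> (d, d) \<in> ?W} = ?L + 1 - max 2 i"
      by simp_all
    have "{j. ?L < j \<and> j \<le> ?P \<and> (1, j) \<in> ?U} = {}"
      and "{j. ?L < j \<and> j \<le> ?P \<and> (1, j) \<in> ?W} = (if i = 1 then {?L<..?P} else {})"
      using i by (auto simp: first_row_box_iff)
    then have row_U: "card {j. ?L < j \<and> j \<le> ?P \<and> (1, j) \<in> ?U} = 0"
      and row_W: "card {j. ?L < j \<and> j \<le> ?P \<and> (1, j) \<in> ?W} = (if i = 1 then ?P - ?L else 0)"
      by simp_all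
    have "sum (antidiagonal_weight lam) ?U + sum (antidiagonal_weight lam) ?W
      = (3 - int ?P) + 2 * int (i - 1)
      + ((if i = 1 then 3 - int ?P else 0) + (if i = 1 then 2 * int ?L - 1 - int ?P else 0)
         - (2 * int ?L - 1 - int ?P) + 2 * int (?L + 1 - max 2 i)
         + 2 * int (if i = 1 then ?P - ?L else 0))"
      unfolding sum_antidiagonal_weight[OF finite_box_subset]
      by (simp only: U W diagonal_U diagonal_W row_U row_W if_True)
    also have "\<dots> = 4"
      using i length_le_first_part by (cases "i = 1") (simp_all add: of_nat_diff max_def)
    finally show ?thesis .
  qed
  ultimately show ?thesis
    by simp
qed

lemma corner_sum_antidiagonal_weight:
  assumes "c \<in> shifted_corners lam"
  shows "(\<Sum>b \<in> {(i, j) \<in> shifted_boxes lam. c \<in> shifted_corners_ij lam i j}. antidiagonal_weight lam b) = 0"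
proof -
  let ?L = "length lam" and ?P = "part lam 1"
  obtain t where t: "t \<in> corner_indices lam" and c: "c = (t, t + part lam (t + 1))"
    using assms by (auto simp: shifted_corners_def corner_point_def)
  define J where "J = t + part lam (t + 1)"
  have t_range: "1 \<le> t" "t + 1 \<le> ?L"
    using t by (simp_all add: corner_indices_def)
  have J: "?L \<le> J" "J \<le> ?P"
    using part_ge_length_diff[of "t + 1"] part_gap[of 1 "t + 1"] t_range by (simp_all add: J_def)
  let ?S = "{b \<in> shifted_boxes lam. fst b \<le> t \<and> snd b \<le> J}"
  have "{(i, j) \<in> shifted_boxes lam. c \<in> shifted_corners_ij lam i j} = ?S"
    using assms c by (auto simp: shifted_corners_ij_def J_def)
  moreover have "sum (antidiagonal_weight lam) ?S = 0"
  proof -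
    have S: "(1, 1) \<in> ?S" "(1, ?L) \<in> ?S" "(?L, ?L) \<notin> ?S"
      using t_range J length_le_first_part by (auto simp: first_row_box_iff diagonal_box_iff)
    have "{d. 2 \<le> d \<and> d \<le> ?L \<and> (d, d) \<in> ?S} = {2..t}"
      using t_range J by (auto simp: diagonal_box_iff)
    then have diagonal: "card {d. 2 \<le> d \<and> d \<le> ?L \<and> (d, d) \<in> ?S} = t - 1"
      by simp
    have "{j. ?L < j \<and> j \<le> ?P \<and> (1, j) \<in> ?S} = {?L<..J}"
      using t_range J by (auto simp: first_row_box_iff)
    then have row: "card {j. ?L < j \<and> j \<le> ?P \<and> (1, j) \<in> ?S} = J - ?L"
      by simp
    have "sum (antidiagonal_weight lam) ?S
      = (3 - int ?P) + (2 * int ?L - 1 - int ?P) + 2 * int (t - 1) + 2 * int (J - ?L)"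
      unfolding sum_antidiagonal_weight[OF finite_box_subset]
      by (simp only: S diagonal row if_True if_False)
    also have "\<dots> = 0"
      using corner[OF t] t_range J by (simp add: J_def of_nat_diff)
    finally show ?thesis .
  qed
  ultimately show ?thesis
    by simp
qed

end

theorem lemma5p5:
  fixes lam :: "nat list"
  assumes "is_strict_partition lam"
    and "shifted_balanced_1 lam \<or> shifted_balanced_2 lam"
  shows "\<exists>r :: nat \<times> nat \<Rightarrow> int.
    (\<forall>(i, j) \<in> shifted_boxes lam. i \<noteq> j \<longrightarrow>
        (\<Sum>i' \<in> {i'. (i', j) \<in> shifted_boxes lam}. r (i', j)) = 2 \<and>
        (\<Sum>j' \<in> {j'. (i, j') \<in> shifted_boxes lam}. r (i, j')) = 2) \<and>
    (\<forall>i. (i, i) \<in> shifted_boxes lam \<longrightarrow>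
        (\<Sum>b \<in> {(i', j') \<in> shifted_boxes lam. i' \<le> i \<and> j' \<le> i}. r b)
      + (\<Sum>b \<in> {(i', j') \<in> shifted_boxes lam. i' \<ge> i \<and> j' \<ge> i}. r b) = 4) \<and>
    (\<forall>c \<in> shifted_corners lam.
        (\<Sum>b \<in> {(i, j) \<in> shifted_boxes lam. c \<in> shifted_corners_ij lam i j}. r b) = 0)"
proof -
  interpret corners_on_antidiagonal lam
    using shifted_balanced_corners_on_antidiagonal[OF assms] .
  show ?thesis
    using column_sum_antidiagonal_weight row_sum_antidiagonal_weight
      hook_sum_antidiagonal_weight corner_sum_antidiagonal_weight
    by blast
qed

end
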